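(* Let $c_1>0>c_2$, $L=c_1-c_2$, $t_0>0$, let $u,q_1,q_2$ be as in the context, and for $\xi\in\mathbb R$ set $$C(\xi)=c_2-c_1e^{-Lt_0}+Le^{\xi+c_2t_0},\qquad D(\xi)=L^2e^{-c_1t_0}-Lc_1e^{\xi}+Lc_2e^{\xi-Lt_0}.$$ Then for every $\xi\in[q_1(0),q_2(0)]$ and every $t\in[0,t_0)$ both quantities $$D(\xi)+\big(c_1e^{c_2(t-t_0)}-c_2e^{c_1(t-t_0)}\big)C(\xi)\quad\text{and}\quad \big(c_1e^{L(t-t_0)}-c_2\big)D(\xi)+L^2e^{c_1(t-t_0)}C(\xi)$$ are strictly negative, so that $$y_m(t,\xi)=\ln\!\left(\frac{e^{c_2(t-t_0)}}{L}\cdot\frac{\big(c_1e^{L(t-t_0)}-c_2\big)D(\xi)+L^2e^{c_1(t-t_0)}C(\xi)}{D(\xi)+\big(c_1e^{c_2(t-t_0)}-c_2e^{c_1(t-t_0)}\big)C(\xi)}\right)$$ is well defined. Moreover, for each such $\xi$, $y_m(0,\xi)=\xi$, $q_1(t)\le y_m(t,\xi)\le q_2(t)$, and $t\mapsto y_m(t,\xi)$ solves the characteristic equation $$\partial_t y_m(t,\xi)=u\big(t,y_m(t,\xi)\big),\qquad 0\le t<t_0,$$ and $y_m(t,\xi)\to 0$ as $t\uparrow t_0$.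
   Context: For $t\neq t_0$ define $$p_1(t)=\frac{c_1-c_2e^{L(t-t_0)}}{1-e^{L(t-t_0)}},\qquad p_2(t)=\frac{c_2-c_1e^{L(t-t_0)}}{1-e^{L(t-t_0)}},$$ and for all $t$ define $$q_1(t)=\ln L+c_1(t-t_0)-\ln\big(c_1-c_2e^{L(t-t_0)}\big),\qquad q_2(t)=-\ln L+c_2(t-t_0)+\ln\big(c_1e^{L(t-t_0)}-c_2\big).$$ Set $u(t,x)=p_1(t)e^{-|x-q_1(t)|}+p_2(t)e^{-|x-q_2(t)|}$ for $x\in\mathbb R$, $t<t_0$. *)

theory Defs
  imports Complex_Main
begin

definition p1 :: "real \<Rightarrow> real \<Rightarrow> real \<Rightarrow> real \<Rightarrow> real" where
  "p1 c1 c2 t0 t = (c1 - c2 * exp ((c1 - c2) * (t - t0))) / (1 - exp ((c1 - c2) * (t - t0)))"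

definition p2 :: "real \<Rightarrow> real \<Rightarrow> real \<Rightarrow> real \<Rightarrow> real" where
  "p2 c1 c2 t0 t = (c2 - c1 * exp ((c1 - c2) * (t - t0))) / (1 - exp ((c1 - c2) * (t - t0)))"

definition q1 :: "real \<Rightarrow> real \<Rightarrow> real \<Rightarrow> real \<Rightarrow> real" where
  "q1 c1 c2 t0 t = ln (c1 - c2) + c1 * (t - t0) - ln (c1 - c2 * exp ((c1 - c2) * (t - t0)))"

definition q2 :: "real \<Rightarrow> real \<Rightarrow> real \<Rightarrow> real \<Rightarrow> real" where
  "q2 c1 c2 t0 t = - ln (c1 - c2) + c2 * (t - t0) + ln (c1 * exp ((c1 - c2) * (t - t0)) - c2)"

definition u :: "real \<Rightarrow> real \<Rightarrow> real \<Rightarrow> real \<Rightarrow> real \<Rightarrow> real" where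
  "u c1 c2 t0 t x = p1 c1 c2 t0 t * exp (- \<bar>x - q1 c1 c2 t0 t\<bar>)
                  + p2 c1 c2 t0 t * exp (- \<bar>x - q2 c1 c2 t0 t\<bar>)"

definition Cf :: "real \<Rightarrow> real \<Rightarrow> real \<Rightarrow> real \<Rightarrow> real" where
  "Cf c1 c2 t0 \<xi> = c2 - c1 * exp (- (c1 - c2) * t0) + (c1 - c2) * exp (\<xi> + c2 * t0)"

definition Df :: "real \<Rightarrow> real \<Rightarrow> real \<Rightarrow> real \<Rightarrow> real" where
  "Df c1 c2 t0 \<xi> = (c1 - c2)^2 * exp (- c1 * t0) - (c1 - c2) * c1 * exp \<xi>
                   + (c1 - c2) * c2 * exp (\<xi> - (c1 - c2) * t0)"

definition Qden :: "real \<Rightarrow> real \<Rightarrow> real \<Rightarrow> real \<Rightarrow> real \<Rightarrow> real" where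
  "Qden c1 c2 t0 t \<xi> = Df c1 c2 t0 \<xi>
     + (c1 * exp (c2 * (t - t0)) - c2 * exp (c1 * (t - t0))) * Cf c1 c2 t0 \<xi>"

definition Qnum :: "real \<Rightarrow> real \<Rightarrow> real \<Rightarrow> real \<Rightarrow> real \<Rightarrow> real" where
  "Qnum c1 c2 t0 t \<xi> = (c1 * exp ((c1 - c2) * (t - t0)) - c2) * Df c1 c2 t0 \<xi>
     + (c1 - c2)^2 * exp (c1 * (t - t0)) * Cf c1 c2 t0 \<xi>"

definition ym :: "real \<Rightarrow> real \<Rightarrow> real \<Rightarrow> real \<Rightarrow> real \<Rightarrow> real" where
  "ym c1 c2 t0 t \<xi> = ln (exp (c2 * (t - t0)) / (c1 - c2)
     * (Qnum c1 c2 t0 t \<xi> / Qden c1 c2 t0 t \<xi>))"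

end

theory Submission
  imports Defs
begin

text \<open>
  Put \<open>a = exp (c1 (t - t0))\<close>, \<open>b = exp (c2 (t - t0))\<close> and \<open>Y = exp y\<close>. Between the two
  peaks, \<open>q1 t \<le> y \<le> q2 t\<close>, the characteristic equation \<open>y' = u t y\<close> becomes the Riccati
  equation \<open>Y' = L (a b - Y^2) / (b - a)\<close>, and \<open>exp ym = N / (L Qden)\<close> with \<open>N = b Qnum\<close> solves
  it by a polynomial identity. \<open>N\<close> and \<open>Qden\<close> are combinations of \<open>C \<xi>\<close> and \<open>D \<xi>\<close> with positive
  coefficients, while \<open>C \<xi> \<le> 0 \<longleftrightarrow> \<xi> \<le> q2 0\<close> and \<open>D \<xi> \<le> 0 \<longleftrightarrow> q1 0 \<le> \<xi>\<close>, never both with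
  equality because \<open>q1 0 < q2 0\<close>; this gives the signs. The bounds \<open>q1 \<le> ym \<le> q2\<close> come down
  to the same signs through \<open>(c1 a - c2 b) (c1 b - c2 a) = L^2 a b - c1 c2 (a - b)^2\<close>.
\<close>

lemma cross_product_identity:
  fixes c1 c2 a b :: real
  shows "(c1 * a - c2 * b) * (c1 * b - c2 * a) = (c1 - c2)^2 * a * b - c1 * c2 * (a - b)^2"
  by (simp add: algebra_simps power2_eq_square)

text \<open>With \<open>a' = c1 a\<close> and \<open>b' = c2 b\<close> the two brackets on the left are \<open>M'\<close> and \<open>Q'\<close>, so this
  says that \<open>Y = M / ((c1 - c2) Q)\<close> solves \<open>Y' = (c1 - c2) (a b - Y^2) / (b - a)\<close>.\<close>
lemma riccati_identity:
  fixes c1 c2 a b C D :: real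
  defines "M \<equiv> (c1 * a - c2 * b) * D + (c1 - c2)^2 * a * b * C"
    and "Q \<equiv> D + (c1 * b - c2 * a) * C"
  shows "(b - a) * (((c1^2 * a - c2^2 * b) * D + (c1 - c2)^2 * (c1 + c2) * a * b * C) * Q
            - M * (c1 * c2 * (b - a) * C))
         = (c1 - c2)^2 * a * b * Q^2 - M^2"
  unfolding M_def Q_def by (simp add: algebra_simps power2_eq_square)

lemma pos_combination_of_nonpos_neg:
  fixes p q x y :: real
  assumes "p > 0" "q > 0" "x \<le> 0" "y \<le> 0" "x < 0 \<or> y < 0"
  shows "p * x + q * y < 0"
  using assms by (smt (verit) mult_pos_neg mult_nonneg_nonpos)

lemma riccati_quotient_bounds:
  fixes c1 c2 a b C D :: real
  assumes c1: "c1 > 0" and c2: "c2 < 0" and a: "a > 0" and b: "b > 0"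
    and C: "C \<le> 0" and D: "D \<le> 0" and den_neg: "D + (c1 * b - c2 * a) * C < 0"
  defines "M \<equiv> (c1 * a - c2 * b) * D + (c1 - c2)^2 * a * b * C"
  shows "(c1 - c2) * a * b / (c1 * b - c2 * a) \<le> M / ((c1 - c2) * (D + (c1 * b - c2 * a) * C))"
    and "M / ((c1 - c2) * (D + (c1 * b - c2 * a) * C)) \<le> (c1 * a - c2 * b) / (c1 - c2)"
proof -
  define l k v Q where "l = c1 - c2" and "k = c1 * b - c2 * a" and "v = c1 * a - c2 * b"
    and "Q = D + k * C"
  have "l > 0" "Q < 0" using c1 c2 den_neg unfolding l_def Q_def k_def by simp_all
  then have "l * Q < 0" by (simp add: mult_pos_neg)
  have "k > 0" using c1 c2 a b unfolding k_def by (smt (verit) mult_pos_pos mult_neg_pos)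
  have gap: "c1 * c2 * (a - b)^2 \<le> 0"
    using c1 c2 by (simp add: mult_pos_neg mult_nonpos_nonneg less_imp_le)
  have "l^2 * a * b * Q - k * M = c1 * c2 * (a - b)^2 * D"
    unfolding l_def k_def Q_def M_def by (simp add: algebra_simps power2_eq_square)
  also have "\<dots> \<ge> 0" using gap D by (simp add: mult_nonpos_nonpos)
  finally have "M * k \<le> l * a * b * (l * Q)" by (simp add: power2_eq_square algebra_simps)
  then show "(c1 - c2) * a * b / (c1 * b - c2 * a) \<le> M / ((c1 - c2) * (D + (c1 * b - c2 * a) * C))"
    using \<open>k > 0\<close> \<open>l * Q < 0\<close> unfolding Q_def[symmetric] l_def[symmetric] k_def[symmetric]
    by (simp add: divide_le_eq le_divide_eq mult_pos_neg)
  have "M - v * Q = c1 * c2 * (a - b)^2 * C"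
    unfolding v_def Q_def k_def M_def by (simp add: algebra_simps power2_eq_square)
  also have "\<dots> \<ge> 0" using gap C by (simp add: mult_nonpos_nonpos)
  finally have "v * Q \<le> M" by simp
  then show "M / ((c1 - c2) * (D + (c1 * b - c2 * a) * C)) \<le> (c1 * a - c2 * b) / (c1 - c2)"
    using \<open>l > 0\<close> \<open>l * Q < 0\<close>
    unfolding Q_def[symmetric] l_def[symmetric] k_def[symmetric] v_def[symmetric]
    by (simp add: divide_le_eq mult_pos_neg)
qed

locale peakon_antipeakon =
  fixes c1 c2 t0 :: real
  assumes c1_pos: "c1 > 0" and c2_neg: "c2 < 0"
begin

abbreviation L :: real where "L \<equiv> c1 - c2"
abbreviation a :: "real \<Rightarrow> real" where "a t \<equiv> exp (c1 * (t - t0))"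
abbreviation b :: "real \<Rightarrow> real" where "b t \<equiv> exp (c2 * (t - t0))"
abbreviation C :: "real \<Rightarrow> real" where "C \<equiv> Cf c1 c2 t0"
abbreviation D :: "real \<Rightarrow> real" where "D \<equiv> Df c1 c2 t0"
abbreviation N :: "real \<Rightarrow> real \<Rightarrow> real" where
  "N t \<xi> \<equiv> (c1 * a t - c2 * b t) * D \<xi> + L^2 * a t * b t * C \<xi>"

lemma L_pos: "L > 0"
  using c1_pos c2_neg by simp

lemma weighted_difference_pos: "x > 0 \<Longrightarrow> y > 0 \<Longrightarrow> c1 * x - c2 * y > 0"
  using c1_pos c2_neg by (smt (verit) mult_pos_pos mult_neg_pos)

lemma exp_L_mult: "exp (L * (t - t0)) = a t / b t"
  by (simp add: exp_diff[symmetric] algebra_simps)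

lemma exp_q1: "exp (q1 c1 c2 t0 t) = L * a t * b t / (c1 * b t - c2 * a t)"
proof -
  have "c1 - c2 * (a t / b t) = (c1 * b t - c2 * a t) / b t" by (simp add: field_simps)
  moreover have "c1 * b t - c2 * a t > 0" by (rule weighted_difference_pos) simp_all
  ultimately show ?thesis
    unfolding q1_def exp_L_mult using L_pos by (simp add: exp_add exp_diff)
qed

lemma exp_q2: "exp (q2 c1 c2 t0 t) = (c1 * a t - c2 * b t) / L"
proof -
  have "c1 * (a t / b t) - c2 = (c1 * a t - c2 * b t) / b t" by (simp add: field_simps)
  moreover have "c1 * a t - c2 * b t > 0" by (rule weighted_difference_pos) simp_all
  ultimately show ?thesis
    unfolding q2_def exp_L_mult using L_pos by (simp add: exp_add exp_diff exp_minus field_simps)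
qed

lemma q1_less_q2:
  assumes "t < t0"
  shows "q1 c1 c2 t0 t < q2 c1 c2 t0 t"
proof -
  have "a t < b t"
    using assms c1_pos c2_neg by (simp add: mult_strict_right_mono_neg)
  then have "(a t - b t)^2 > 0"
    by (simp only: zero_less_power2)
  then have "c1 * c2 * (a t - b t)^2 < 0"
    using c1_pos c2_neg by (simp add: mult_pos_neg mult_neg_pos)
  then have "L^2 * a t * b t < (c1 * a t - c2 * b t) * (c1 * b t - c2 * a t)"
    unfolding cross_product_identity by simp
  then have "exp (q1 c1 c2 t0 t) < exp (q2 c1 c2 t0 t)"
    unfolding exp_q1 exp_q2 using L_pos weighted_difference_pos[of "b t" "a t"]
    by (simp add: field_simps power2_eq_square)
  then show ?thesis by simp
qed

lemma Cf_eq: "C \<xi> = c2 - c1 * (a 0 / b 0) + L * (exp \<xi> / b 0)"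
proof -
  have "exp (- L * t0) = a 0 / b 0" "exp (\<xi> + c2 * t0) = exp \<xi> / b 0"
    unfolding exp_diff[symmetric] by (simp_all add: algebra_simps)
  then show ?thesis unfolding Cf_def by simp
qed

lemma Df_eq: "D \<xi> = L^2 * a 0 - L * c1 * exp \<xi> + L * c2 * (exp \<xi> * (a 0 / b 0))"
proof -
  have "exp (\<xi> - L * t0) = exp \<xi> * (a 0 / b 0)"
    unfolding exp_diff[symmetric] exp_add[symmetric] by (simp add: algebra_simps)
  then show ?thesis unfolding Df_def by simp
qed

lemma Cf_factor: "b 0 * C \<xi> = L * (exp \<xi> - exp (q2 c1 c2 t0 0))"
  unfolding Cf_eq exp_q2 using L_pos by (simp add: field_simps)

lemma Df_factor: "b 0 * D \<xi> = L * (c1 * b 0 - c2 * a 0) * (exp (q1 c1 c2 t0 0) - exp \<xi>)"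
  unfolding Df_eq exp_q1 using weighted_difference_pos[of "b 0" "a 0"]
  by (simp add: field_simps power2_eq_square)

lemma Qnum_eq: "Qnum c1 c2 t0 t \<xi> = N t \<xi> / b t"
  unfolding Qnum_def exp_L_mult by (simp add: field_simps)

lemma ym_eq_ln: "ym c1 c2 t0 t \<xi> = ln (N t \<xi> / (L * Qden c1 c2 t0 t \<xi>))"
  unfolding ym_def Qnum_eq by simp

lemma N_has_derivative:
  "((\<lambda>s. N s \<xi>) has_real_derivative
     (c1^2 * a t - c2^2 * b t) * D \<xi> + L^2 * (c1 + c2) * a t * b t * C \<xi>) (at t)"
  by (auto intro!: derivative_eq_intros simp: algebra_simps power2_eq_square)

lemma Qden_has_derivative:
  "((\<lambda>s. Qden c1 c2 t0 s \<xi>) has_real_derivative c1 * c2 * (b t - a t) * C \<xi>) (at t)"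
  unfolding Qden_def by (auto intro!: derivative_eq_intros simp: algebra_simps)

lemma u_between_peaks:
  assumes "t < t0" and "q1 c1 c2 t0 t \<le> y" and "y \<le> q2 c1 c2 t0 t"
  shows "u c1 c2 t0 t y = L * (a t * b t / exp y - exp y) / (b t - a t)"
proof -
  define A B where "A = a t" and "B = b t"
  define K1 K2 where "K1 = c1 * B - c2 * A" and "K2 = c1 * A - c2 * B"
  have "A < B" "B > 0"
    using assms c1_pos c2_neg unfolding A_def B_def by (simp_all add: mult_strict_right_mono_neg)
  have "K1 > 0" "K2 > 0"
    unfolding K1_def K2_def A_def B_def by (rule weighted_difference_pos; simp)+
  have "p1 c1 c2 t0 t = K1 / (B - A)" "p2 c1 c2 t0 t = - K2 / (B - A)"
    unfolding p1_def p2_def exp_L_mult A_def[symmetric] B_def[symmetric] K1_def K2_def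
    using \<open>A < B\<close> \<open>B > 0\<close> by (simp_all add: field_simps)
  moreover have "exp (- \<bar>y - q1 c1 c2 t0 t\<bar>) = L * A * B / (K1 * exp y)"
    using assms(2) unfolding A_def B_def K1_def by (simp add: exp_diff exp_q1)
  moreover have "exp (- \<bar>y - q2 c1 c2 t0 t\<bar>) = L * exp y / K2"
    using assms(3) unfolding A_def B_def K2_def by (simp add: exp_diff exp_q2)
  moreover have "K1 / (B - A) * (L * A * B / (K1 * exp y)) + - K2 / (B - A) * (L * exp y / K2)
                 = L * (A * B / exp y - exp y) / (B - A)"
    using \<open>A < B\<close> \<open>K1 > 0\<close> \<open>K2 > 0\<close> by (simp add: divide_simps) (simp add: algebra_simps)
  ultimately show ?thesis
    unfolding u_def A_def B_def by simp
qed

end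

locale characteristic_curve = peakon_antipeakon +
  fixes \<xi> :: real
  assumes t0_pos: "t0 > 0" and \<xi>_range: "\<xi> \<in> {q1 c1 c2 t0 0 .. q2 c1 c2 t0 0}"
begin

lemma C_nonpos: "C \<xi> \<le> 0"
proof -
  have "b 0 * C \<xi> \<le> 0"
    unfolding Cf_factor using \<xi>_range L_pos by (simp add: mult_nonneg_nonpos)
  then show ?thesis by (simp add: mult_le_0_iff)
qed

lemma D_nonpos: "D \<xi> \<le> 0"
proof -
  have "c1 * b 0 - c2 * a 0 > 0" by (rule weighted_difference_pos) simp_all
  then have "b 0 * D \<xi> \<le> 0"
    unfolding Df_factor using \<xi>_range L_pos by (simp add: mult_nonneg_nonpos)
  then show ?thesis by (simp add: mult_le_0_iff)
qed

lemma C_or_D_neg: "C \<xi> < 0 \<or> D \<xi> < 0"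
proof (rule ccontr)
  assume "\<not> (C \<xi> < 0 \<or> D \<xi> < 0)"
  then have "C \<xi> = 0" "D \<xi> = 0" using C_nonpos D_nonpos by auto
  then have "exp \<xi> = exp (q2 c1 c2 t0 0)" "exp (q1 c1 c2 t0 0) = exp \<xi>"
    using Cf_factor[of \<xi>] Df_factor[of \<xi>] L_pos weighted_difference_pos[of "b 0" "a 0"] by auto
  then show False using q1_less_q2[of 0] t0_pos by simp
qed

lemma Qden_neg: "Qden c1 c2 t0 t \<xi> < 0"
  unfolding Qden_def
  using pos_combination_of_nonpos_neg[of 1 "c1 * b t - c2 * a t", OF _ _ D_nonpos C_nonpos]
    C_or_D_neg weighted_difference_pos[of "b t" "a t"] by auto

lemma N_neg: "N t \<xi> < 0"
  using pos_combination_of_nonpos_neg[of "c1 * a t - c2 * b t" "L^2 * a t * b t", OF _ _ D_nonpos C_nonpos]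
    C_or_D_neg weighted_difference_pos[of "a t" "b t"] L_pos by auto

lemma Qnum_neg: "Qnum c1 c2 t0 t \<xi> < 0"
  unfolding Qnum_eq using N_neg by (simp add: divide_neg_pos)

lemma ym_argument_pos: "N t \<xi> / (L * Qden c1 c2 t0 t \<xi>) > 0"
  using N_neg Qden_neg L_pos by (simp add: divide_neg_neg mult_pos_neg)

lemma exp_ym: "exp (ym c1 c2 t0 t \<xi>) = N t \<xi> / (L * Qden c1 c2 t0 t \<xi>)"
  unfolding ym_eq_ln using ym_argument_pos by simp

lemma ym_between: "q1 c1 c2 t0 t \<le> ym c1 c2 t0 t \<xi> \<and> ym c1 c2 t0 t \<xi> \<le> q2 c1 c2 t0 t"
proof -
  have "exp (q1 c1 c2 t0 t) \<le> exp (ym c1 c2 t0 t \<xi>)" "exp (ym c1 c2 t0 t \<xi>) \<le> exp (q2 c1 c2 t0 t)"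
    unfolding exp_q1 exp_q2 exp_ym
    using riccati_quotient_bounds[OF c1_pos c2_neg _ _ C_nonpos D_nonpos Qden_neg[unfolded Qden_def]]
    by (simp_all add: Qden_def)
  then show ?thesis by simp
qed

lemma ym_initial: "ym c1 c2 t0 0 \<xi> = \<xi>"
proof -
  define A B X where "A = a 0" and "B = b 0" and "X = exp \<xi>"
  have "B > 0" unfolding B_def by simp
  have "N 0 \<xi> = L * X * Qden c1 c2 t0 0 \<xi>"
    unfolding Qden_def Cf_eq Df_eq A_def[symmetric] B_def[symmetric] X_def[symmetric]
    using \<open>B > 0\<close> by (simp add: field_simps power2_eq_square)
  then have "exp (ym c1 c2 t0 0 \<xi>) = exp \<xi>"
    unfolding exp_ym X_def using Qden_neg[of 0] L_pos by simp
  then show ?thesis by simp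
qed

lemma ym_at_t0: "ym c1 c2 t0 t0 \<xi> = 0"
proof -
  have "N t0 \<xi> = L * Qden c1 c2 t0 t0 \<xi>"
    unfolding Qden_def by (simp add: algebra_simps power2_eq_square)
  then have "exp (ym c1 c2 t0 t0 \<xi>) = 1"
    unfolding exp_ym using Qden_neg[of t0] L_pos by simp
  then show ?thesis by simp
qed

lemma ym_tendsto_0: "((\<lambda>t. ym c1 c2 t0 t \<xi>) \<longlongrightarrow> 0) (at_left t0)"
proof -
  have "isCont (\<lambda>t. ym c1 c2 t0 t \<xi>) t0"
    unfolding ym_eq_ln Qden_def using ym_argument_pos[of t0] Qden_neg[of t0] L_pos
    by (intro continuous_intros) (auto simp: Qden_def)
  then have "((\<lambda>t. ym c1 c2 t0 t \<xi>) \<longlongrightarrow> 0) (at t0)"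
    using ym_at_t0 by (simp add: isCont_def)
  then show ?thesis by (rule tendsto_mono[OF at_le, rotated]) simp
qed

lemma ym_solves_characteristic_equation:
  assumes "t < t0"
  shows "((\<lambda>s. ym c1 c2 t0 s \<xi>) has_real_derivative u c1 c2 t0 t (ym c1 c2 t0 t \<xi>)) (at t)"
proof -
  define Q where "Q s = Qden c1 c2 t0 s \<xi>" for s
  define N' Q' where "N' = (c1^2 * a t - c2^2 * b t) * D \<xi> + L^2 * (c1 + c2) * a t * b t * C \<xi>"
    and "Q' = c1 * c2 * (b t - a t) * C \<xi>"
  note dN = N_has_derivative[of \<xi> t, folded N'_def]
  note dQ = Qden_has_derivative[of \<xi> t, folded Q'_def, folded Q_def]
  have "L * Q t \<noteq> 0" unfolding Q_def using Qden_neg[of t] L_pos by simp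
  have "((\<lambda>s. ln (N s \<xi> / (L * Q s))) has_real_derivative
          1 / (N t \<xi> / (L * Q t)) * ((N' * (L * Q t) - N t \<xi> * (L * Q')) / (L * Q t * (L * Q t)))) (at t)"
    by (rule DERIV_chain2[OF DERIV_ln_divide[OF ym_argument_pos[of t, folded Q_def]]
          DERIV_divide[OF dN DERIV_cmult[OF dQ] \<open>L * Q t \<noteq> 0\<close>]])
  moreover have "1 / (N t \<xi> / (L * Q t)) * ((N' * (L * Q t) - N t \<xi> * (L * Q')) / (L * Q t * (L * Q t)))
                 = u c1 c2 t0 t (ym c1 c2 t0 t \<xi>)"
  proof -
    define A B l Nt Qt where "A = a t" and "B = b t" and "l = L" and "Nt = N t \<xi>" and "Qt = Q t"
    have "A < B" using assms c1_pos c2_neg unfolding A_def B_def by (simp add: mult_strict_right_mono_neg)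
    have "Nt < 0" "Qt < 0" "l > 0" unfolding Nt_def Qt_def Q_def l_def by (rule N_neg Qden_neg L_pos)+
    have "B - A \<noteq> 0" "Nt * Qt \<noteq> 0" using \<open>A < B\<close> \<open>Nt < 0\<close> \<open>Qt < 0\<close> by simp_all
    have "1 / (Nt / (l * Qt)) * ((N' * (l * Qt) - Nt * (l * Q')) / (l * Qt * (l * Qt)))
          = (B - A) * (N' * Qt - Nt * Q') / ((B - A) * (Nt * Qt))"
      using \<open>B - A \<noteq> 0\<close> \<open>Nt < 0\<close> \<open>Qt < 0\<close> \<open>l > 0\<close> by (simp add: field_simps)
    also have "(B - A) * (N' * Qt - Nt * Q') = l^2 * A * B * Qt^2 - Nt^2"
      unfolding A_def B_def l_def Nt_def Qt_def Q_def N'_def Q'_def Qden_def by (rule riccati_identity)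
    also have "(l^2 * A * B * Qt^2 - Nt^2) / ((B - A) * (Nt * Qt))
               = l * (A * B / (Nt / (l * Qt)) - Nt / (l * Qt)) / (B - A)"
      using \<open>B - A \<noteq> 0\<close> \<open>Nt < 0\<close> \<open>Qt < 0\<close> \<open>l > 0\<close> by (simp add: field_simps power2_eq_square)
    finally have "1 / (Nt / (l * Qt)) * ((N' * (l * Qt) - Nt * (l * Q')) / (l * Qt * (l * Qt)))
               = l * (A * B / (Nt / (l * Qt)) - Nt / (l * Qt)) / (B - A)" .
    then show ?thesis
      unfolding u_between_peaks[OF assms ym_between[THEN conjunct1] ym_between[THEN conjunct2]] exp_ym
      unfolding A_def B_def l_def Nt_def Qt_def Q_def .
  qed
  moreover have "(\<lambda>s. ym c1 c2 t0 s \<xi>) = (\<lambda>s. ln (N s \<xi> / (L * Q s)))"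
    unfolding ym_eq_ln Q_def ..
  ultimately show ?thesis by (metis DERIV_cong)
qed

end

theorem mainTheorem4:
  fixes c1 c2 t0 \<xi> :: real
  assumes "c1 > 0" and "c2 < 0" and "t0 > 0"
    and "\<xi> \<in> {q1 c1 c2 t0 0 .. q2 c1 c2 t0 0}"
  shows "(\<forall>t\<in>{0..<t0}. Qden c1 c2 t0 t \<xi> < 0 \<and> Qnum c1 c2 t0 t \<xi> < 0)
    \<and> ym c1 c2 t0 0 \<xi> = \<xi>
    \<and> (\<forall>t\<in>{0..<t0}. q1 c1 c2 t0 t \<le> ym c1 c2 t0 t \<xi> \<and> ym c1 c2 t0 t \<xi> \<le> q2 c1 c2 t0 t)
    \<and> (\<forall>t\<in>{0..<t0}. ((\<lambda>s. ym c1 c2 t0 s \<xi>) has_real_derivative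
                          u c1 c2 t0 t (ym c1 c2 t0 t \<xi>)) (at t within {0..<t0}))
    \<and> ((\<lambda>t. ym c1 c2 t0 t \<xi>) \<longlongrightarrow> 0) (at_left t0)"
proof -
  interpret characteristic_curve c1 c2 t0 \<xi>
    by unfold_locales (fact assms)+
  have "\<forall>t\<in>{0..<t0}. ((\<lambda>s. ym c1 c2 t0 s \<xi>) has_real_derivative
                        u c1 c2 t0 t (ym c1 c2 t0 t \<xi>)) (at t within {0..<t0})"
    using ym_solves_characteristic_equation by (auto intro: has_field_derivative_at_within)
  then show ?thesis
    using Qden_neg Qnum_neg ym_initial ym_between ym_tendsto_0 by blast
qed

end
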